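(* Let $T\ge1$, $\delta>0$, and let $A$ be a smooth connection on the trivial principal $G$-bundle over $\mathcal C_T$ satisfying $D_A^*F_A=\lambda B$, where $B$ is a $\mathfrak g$-valued 1-form with $\|B\|_{L^\infty(\mathcal C_T)}\le C_B$ and $\lambda=\lambda(t)$ satisfies $|\lambda(t)|\le C_0\delta e^{|t|-T}$ for $t\in[-T,T]$. Assume $\|F_A\|_{L^2(\mathcal C_t)}\le C_0\delta e^{t-T}$ for all $t\in(0,T]$, and that $\|F_A\|_{L^2(\mathcal C_T)}$ is small enough that on every disk of radius $1$ in $\mathcal C_T$ there is a Coulomb gauge ($d^*A=0$) with $\|A\|_{W^{1,2}}\le C\|F_A\|_{L^2}$. Then there is a constant $C$ depending only on $C_0,C_B$ and $G$ such that $$\|F_A\|_{L^\infty(\mathcal C_{t-1})}\le C\delta e^{t-T}\quad\text{for all }t\in[1,T].$$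
   Context: $G$ is a compact connected Lie group with Lie algebra $\mathfrak g$ (with an $\mathrm{Ad}$-invariant inner product). For $T>0$, $\mathcal C_T=[-T,T]\times S^1$ with coordinates $(t,\theta)$ and flat metric $dt^2+d\theta^2$; $\mathcal C_t=[-t,t]\times S^1$. A connection on the trivial bundle is a $\mathfrak g$-valued 1-form $A$, $D_A=d+A$ is the induced exterior covariant derivative, $D_A^*$ its formal adjoint, and $F_A=dA+\tfrac12[A,A]$ its curvature. *)

theory Defs
  imports "HOL-Analysis.Analysis"
begin

text \<open>Coordinates on the (universal cover of the) cylinder: points p = (t, theta) of real \<times> real.
  The circle S^1 is R / 2 pi Z; objects on the cylinder are 2 pi-periodic in theta.\<close>

definition dT :: "(real \<times> real \<Rightarrow> 'b::real_normed_vector) \<Rightarrow> real \<times> real \<Rightarrow> 'b" where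
  "dT f p = vector_derivative (\<lambda>s. f (s, snd p)) (at (fst p))"

definition dTh :: "(real \<times> real \<Rightarrow> 'b::real_normed_vector) \<Rightarrow> real \<times> real \<Rightarrow> 'b" where
  "dTh f p = vector_derivative (\<lambda>s. f (fst p, s)) (at (snd p))"

fun Ck :: "nat \<Rightarrow> (real \<times> real) set \<Rightarrow> (real \<times> real \<Rightarrow> 'b::real_normed_vector) \<Rightarrow> bool" where
  "Ck 0 U f = continuous_on U f"
| "Ck (Suc k) U f = ((\<forall>p\<in>U. f differentiable (at p)) \<and> Ck k U (dT f) \<and> Ck k U (dTh f))"

definition smooth_on :: "(real \<times> real) set \<Rightarrow> (real \<times> real \<Rightarrow> 'b::real_normed_vector) \<Rightarrow> bool" where
  "smooth_on U f \<longleftrightarrow> (\<forall>k. Ck k U f)"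

text \<open>Compact connected Lie group, realised as a closed (compact) connected subgroup of O(n).
  The Ad-invariant inner product on its Lie algebra is the Frobenius one (norm on real^'n^'n).\<close>
definition compact_matrix_group :: "(real^'n^'n) set \<Rightarrow> bool" where
  "compact_matrix_group G \<longleftrightarrow> compact G \<and> connected G \<and> mat 1 \<in> G \<and>
     (\<forall>x\<in>G. \<forall>y\<in>G. x ** y \<in> G) \<and> (\<forall>x\<in>G. matrix_inv x \<in> G) \<and>
     (\<forall>x\<in>G. orthogonal_matrix x)"

definition lie_alg :: "(real^'n^'n) set \<Rightarrow> (real^'n^'n) set" where
  "lie_alg G = {X. \<exists>c. (\<forall>s. c s \<in> G) \<and> c 0 = mat 1 \<and> (c has_vector_derivative X) (at 0)}"

definition lbr :: "real^'n^'n \<Rightarrow> real^'n^'n \<Rightarrow> real^'n^'n" where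
  "lbr X Y = X ** Y - Y ** X"

text \<open>Connection A = a1 dt + a2 dtheta. Curvature F_A = f dt\<and>dtheta with
  f = d_t a2 - d_theta a1 + [a1,a2].\<close>
definition curv :: "(real \<times> real \<Rightarrow> real^'n^'n) \<Rightarrow> (real \<times> real \<Rightarrow> real^'n^'n) \<Rightarrow> real \<times> real \<Rightarrow> real^'n^'n" where
  "curv a1 a2 p = dT a2 p - dTh a1 p + lbr (a1 p) (a2 p)"

text \<open>D_A^* (f dt\<and>dtheta) = (nabla_theta f) dt - (nabla_t f) dtheta, nabla_i f = d_i f + [a_i, f].
  We give its dt- and dtheta-components.\<close>
definition DAstar1 where
  "DAstar1 a1 a2 f p = dTh f p + lbr (a2 p) (f p)"
definition DAstar2 where
  "DAstar2 a1 a2 f p = - (dT f p + lbr (a1 p) (f p))"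

text \<open>The truncated cylinder C_t = [-t,t] \<times> S^1 (fundamental domain theta in [0, 2 pi]).\<close>
definition cyl :: "real \<Rightarrow> (real \<times> real) set" where
  "cyl t = {-t..t} \<times> {0..2*pi}"

definition L2norm :: "(real \<times> real) set \<Rightarrow> (real \<times> real \<Rightarrow> real^'n^'n) \<Rightarrow> real" where
  "L2norm S f = sqrt (integral S (\<lambda>p. (norm (f p))\<^sup>2))"

text \<open>Gauge transform of A by u: u^{-1} A u + u^{-1} du (u orthogonal, u^{-1} = u^T).\<close>
definition gauge_comp where
  "gauge_comp u a d p = transpose (u p) ** a p ** u p + transpose (u p) ** d u p"

definition coulomb_gauge_on where
  "coulomb_gauge_on G Cc a1 a2 D \<longleftrightarrow>
     (\<exists>u. smooth_on D u \<and> (\<forall>p\<in>D. u p \<in> G) \<and>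
       (let b1 = gauge_comp u a1 dT; b2 = gauge_comp u a2 dTh;
            w = (\<lambda>p. (norm (b1 p))\<^sup>2 + (norm (b2 p))\<^sup>2 + (norm (dT b1 p))\<^sup>2 + (norm (dTh b1 p))\<^sup>2
                       + (norm (dT b2 p))\<^sup>2 + (norm (dTh b2 p))\<^sup>2)
        in (\<forall>p\<in>D. dT b1 p + dTh b2 p = 0) \<and> w integrable_on D \<and>
           sqrt (integral D w) \<le> Cc * L2norm D (curv a1 a2)))"

end

theory Submission imports Defs begin

text \<open>Pairing the equation D_A^* F_A = lambda B with F_A kills the bracket terms, because A takes
  values in skew-symmetric matrices. Hence <F_A, d_i F_A> = +-lambda <F_A, B_j>, so |F_A| is Lipschitz
  in each coordinate direction with constant C_B sup |lambda|. If |F_A| were large at a point of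
  C_(t-1), it would be large on a whole unit square inside C_t, contradicting the L^2 bound on C_t.\<close>

lemma inner_matrix_mult_left:
  fixes x y a :: "real^'n^'n"
  shows "x \<bullet> (a ** y) = (transpose a ** x) \<bullet> y"
proof -
  have "x \<bullet> (a ** y) = (\<Sum>i\<in>UNIV. \<Sum>j\<in>UNIV. \<Sum>k\<in>UNIV. a$i$k * x$i$j * y$k$j)"
    by (simp add: inner_vec_def matrix_matrix_mult_def sum_distrib_left mult_ac)
  also have "\<dots> = (\<Sum>i\<in>UNIV. \<Sum>k\<in>UNIV. \<Sum>j\<in>UNIV. a$i$k * x$i$j * y$k$j)"
    by (intro sum.cong refl sum.swap)
  also have "\<dots> = (\<Sum>k\<in>UNIV. \<Sum>j\<in>UNIV. \<Sum>i\<in>UNIV. a$i$k * x$i$j * y$k$j)"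
    by (subst sum.swap) (intro sum.cong refl sum.swap)
  also have "\<dots> = (transpose a ** x) \<bullet> y"
    by (simp add: inner_vec_def matrix_matrix_mult_def transpose_def sum_distrib_left mult_ac)
  finally show ?thesis .
qed

lemma inner_matrix_mult_right:
  fixes x y a :: "real^'n^'n"
  shows "x \<bullet> (y ** a) = (x ** transpose a) \<bullet> y"
proof -
  have "x \<bullet> (y ** a) = (\<Sum>i\<in>UNIV. \<Sum>j\<in>UNIV. \<Sum>k\<in>UNIV. x$i$j * y$i$k * a$k$j)"
    by (simp add: inner_vec_def matrix_matrix_mult_def sum_distrib_left mult_ac)
  also have "\<dots> = (\<Sum>i\<in>UNIV. \<Sum>k\<in>UNIV. \<Sum>j\<in>UNIV. x$i$j * y$i$k * a$k$j)"
    by (intro sum.cong refl sum.swap)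
  also have "\<dots> = (x ** transpose a) \<bullet> y"
    by (simp add: inner_vec_def matrix_matrix_mult_def transpose_def sum_distrib_left mult_ac)
  finally show ?thesis .
qed

lemma matrix_mul_uminus:
  fixes a b :: "real^'n^'n"
  shows "(- a) ** b = - (a ** b)" "a ** (- b) = - (a ** b)"
  by (simp_all add: matrix_matrix_mult_def vec_eq_iff sum_negf)

lemma inner_lbr_self_skew:
  fixes a f :: "real^'n^'n"
  assumes "transpose a = - a"
  shows "f \<bullet> lbr a f = 0"
proof -
  have "f \<bullet> (a ** f) = (transpose a ** f) \<bullet> f" by (rule inner_matrix_mult_left)
  also have "\<dots> = - (f \<bullet> (a ** f))" by (simp add: assms matrix_mul_uminus inner_commute)
  finally have "f \<bullet> (a ** f) = 0" by simp
  moreover have "f \<bullet> (f ** a) = (f ** transpose a) \<bullet> f" by (rule inner_matrix_mult_right)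
  moreover have "\<dots> = - (f \<bullet> (f ** a))" by (simp add: assms matrix_mul_uminus inner_commute)
  ultimately show ?thesis unfolding lbr_def inner_diff_right by simp
qed

lemma bounded_bilinear_matrix_matrix_mult: "bounded_bilinear (\<lambda>x y::real^'n^'n. x ** y)"
  by (rule bilinear_conv_bounded_bilinear[THEN iffD1])
     (auto intro!: linearI simp: bilinear_def matrix_matrix_mult_def vec_eq_iff sum.distrib algebra_simps sum_distrib_left scaleR_sum_right)

lemma bounded_linear_transpose: "bounded_linear (transpose :: real^'n^'n \<Rightarrow> real^'n^'n)"
  by (rule linear_conv_bounded_linear[THEN iffD1]) (auto intro!: linearI simp: transpose_def vec_eq_iff)

lemma differentiable_matrix_mult:
  fixes f g :: "'a::real_normed_vector \<Rightarrow> real^'n^'n"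
  assumes "f differentiable (at x within S)" "g differentiable (at x within S)"
  shows "(\<lambda>x. f x ** g x) differentiable (at x within S)"
  using assms bounded_bilinear.FDERIV[OF bounded_bilinear_matrix_matrix_mult]
  unfolding differentiable_def by blast

lemma lie_alg_skew:
  fixes X :: "real^'n^'n"
  assumes orth: "\<forall>x\<in>G. orthogonal_matrix x" and X: "X \<in> lie_alg G"
  shows "transpose X = - X"
proof -
  obtain c where c: "\<And>s. c s \<in> G" "c 0 = mat 1" and dc: "(c has_derivative (\<lambda>h. h *\<^sub>R X)) (at 0)"
    using X unfolding lie_alg_def has_vector_derivative_def by blast
  have "((\<lambda>s. transpose (c s) ** c s) has_derivative
        (\<lambda>h. transpose (c 0) ** (h *\<^sub>R X) + transpose (h *\<^sub>R X) ** c 0)) (at 0)"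
    by (rule bounded_bilinear.FDERIV[OF bounded_bilinear_matrix_matrix_mult
          bounded_linear.has_derivative[OF bounded_linear_transpose dc] dc])
  moreover have "((\<lambda>s. transpose (c s) ** c s) has_derivative (\<lambda>h. 0)) (at 0)"
    using orth c(1) by (simp add: orthogonal_matrix)
  ultimately have "(\<lambda>h. transpose (c 0) ** (h *\<^sub>R X) + transpose (h *\<^sub>R X) ** c 0) = (\<lambda>h. 0)"
    by (rule has_derivative_unique)
  then have "transpose (c 0) ** (1 *\<^sub>R X) + transpose (1 *\<^sub>R X) ** c 0 = 0"
    by meson
  then have "X + transpose X = 0"
    using c(2) by (simp add: transpose_mat)
  then show ?thesis by (simp add: eq_neg_iff_add_eq_0 add.commute)
qed

lemma inner_DAstar1:
  assumes "transpose (a2 p) = - a2 p"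
  shows "f p \<bullet> DAstar1 a1 a2 f p = f p \<bullet> dTh f p"
  using inner_lbr_self_skew[OF assms] by (simp add: DAstar1_def inner_add_right)

lemma inner_DAstar2:
  assumes "transpose (a1 p) = - a1 p"
  shows "f p \<bullet> DAstar2 a1 a2 f p = - (f p \<bullet> dT f p)"
  using inner_lbr_self_skew[OF assms] by (simp add: DAstar2_def inner_diff_right)

lemma inner_partials_bound_if_DAstar_eq:
  fixes a1 a2 f b1 b2 :: "real \<times> real \<Rightarrow> real^'n^'n"
  assumes skew: "transpose (a1 p) = - a1 p" "transpose (a2 p) = - a2 p"
    and eq: "DAstar1 a1 a2 f p = c *\<^sub>R b1 p" "DAstar2 a1 a2 f p = c *\<^sub>R b2 p"
    and B: "sqrt ((norm (b1 p))\<^sup>2 + (norm (b2 p))\<^sup>2) \<le> B"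
  shows "\<bar>f p \<bullet> dT f p\<bar> \<le> \<bar>c\<bar> * B * norm (f p)" "\<bar>f p \<bullet> dTh f p\<bar> \<le> \<bar>c\<bar> * B * norm (f p)"
proof -
  have *: "\<bar>f p \<bullet> (c *\<^sub>R b)\<bar> \<le> \<bar>c\<bar> * B * norm (f p)" if "norm b \<le> B" for b
  proof -
    have "\<bar>f p \<bullet> (c *\<^sub>R b)\<bar> \<le> norm (f p) * (\<bar>c\<bar> * norm b)"
      using Cauchy_Schwarz_ineq2[of "f p" "c *\<^sub>R b"] by simp
    also have "\<dots> \<le> \<bar>c\<bar> * B * norm (f p)"
      using that by (metis abs_ge_zero mult.commute mult_left_mono norm_ge_zero)
    finally show ?thesis .
  qed
  have "norm (b1 p) \<le> B" "norm (b2 p) \<le> B"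
    by (auto intro: order_trans[OF _ B] real_le_rsqrt)
  then show "\<bar>f p \<bullet> dT f p\<bar> \<le> \<bar>c\<bar> * B * norm (f p)" "\<bar>f p \<bullet> dTh f p\<bar> \<le> \<bar>c\<bar> * B * norm (f p)"
    using *[of "b2 p"] *[of "b1 p"] inner_DAstar1[of a2 p f a1, OF skew(2)] inner_DAstar2[of a1 p f a2, OF skew(1)] eq
    by auto
qed

lemma vector_derivative_at_shift:
  fixes g :: "real \<Rightarrow> 'a::real_normed_vector"
  shows "vector_derivative g (at (x + c)) = vector_derivative (\<lambda>s. g (s + c)) (at x)"
proof -
  have shift: "((\<lambda>s. h (s + d)) has_vector_derivative D) (at y)"
    if "(h has_vector_derivative D) (at (y + d))" for h :: "real \<Rightarrow> 'a" and D y d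
  proof -
    have "((\<lambda>s. s + d) has_vector_derivative 1) (at y)"
      by (auto intro!: derivative_eq_intros)
    from vector_diff_chain_at[OF this] that show ?thesis by (simp add: o_def)
  qed
  have "(g has_vector_derivative D) (at (x + c)) \<longleftrightarrow> ((\<lambda>s. g (s + c)) has_vector_derivative D) (at x)" for D
    using shift[of g D x c] shift[of "\<lambda>s. g (s + c)" D "x + c" "- c"] by auto
  then show ?thesis unfolding vector_derivative_def by simp
qed

lemma periodic_representative:
  fixes g :: "real \<Rightarrow> 'a"
  assumes per: "\<And>s. g (s + c) = g s" and c: "c > 0"
  shows "\<exists>s'\<in>{0..<c}. g s' = g s"
proof -
  have mult: "g (s + of_int k * c) = g s" for s k
  proof (induction k rule: int_induct[where k = 0])
    case (step1 i)
    then show ?case using per[of "s + of_int i * c"] by (simp add: algebra_simps)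
  next
    case (step2 i)
    then show ?case using per[of "s + of_int (i - 1) * c"] by (simp add: algebra_simps)
  qed simp
  define k where "k = \<lfloor>s / c\<rfloor>"
  have "s - of_int k * c \<in> {0..<c}"
    using floor_divide_lower[OF c, of s] floor_divide_upper[OF c, of s]
    unfolding k_def by (simp add: algebra_simps)
  moreover have "g (s - of_int k * c) = g s"
    using mult[of "s - of_int k * c" k] by simp
  ultimately show ?thesis by blast
qed

lemma curv_periodic:
  assumes "\<And>t s. a1 (t, s + 2*pi) = a1 (t, s)" "\<And>t s. a2 (t, s + 2*pi) = a2 (t, s)"
  shows "curv a1 a2 (t, s + 2*pi) = curv a1 a2 (t, s)"
  using assms by (simp add: curv_def dT_def dTh_def vector_derivative_at_shift)

lemma smooth_on_partials:
  assumes "smooth_on U f"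
  shows "smooth_on U (dT f)" "smooth_on U (dTh f)"
  using assms unfolding smooth_on_def by (metis Ck.simps(2))+

lemma smooth_on_imp_differentiable:
  assumes "smooth_on U f" "p \<in> U"
  shows "f differentiable (at p)"
  using assms unfolding smooth_on_def by (metis Ck.simps(2))

lemma curv_differentiable:
  fixes a1 a2 :: "real \<times> real \<Rightarrow> real^'n^'n"
  assumes "smooth_on U a1" "smooth_on U a2" "p \<in> U"
  shows "curv a1 a2 differentiable (at p)"
proof -
  have "(\<lambda>q. a1 q ** a2 q) differentiable (at p)" "(\<lambda>q. a2 q ** a1 q) differentiable (at p)"
    using assms smooth_on_imp_differentiable differentiable_matrix_mult by blast+
  then show ?thesis
    using assms smooth_on_imp_differentiable smooth_on_partials
    unfolding curv_def[abs_def] lbr_def by (intro differentiable_add differentiable_diff) blast+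
qed

lemma curv_continuous_on:
  fixes a1 a2 :: "real \<times> real \<Rightarrow> real^'n^'n"
  assumes "smooth_on U a1" "smooth_on U a2" "S \<subseteq> U"
  shows "continuous_on S (curv a1 a2)"
  using assms curv_differentiable differentiable_imp_continuous_within
  by (blast intro: continuous_at_imp_continuous_on)

lemma has_vector_derivative_dT:
  fixes f :: "real \<times> real \<Rightarrow> 'a::real_normed_vector"
  assumes "f differentiable (at (s, th))"
  shows "((\<lambda>x. f (x, th)) has_vector_derivative dT f (s, th)) (at s)"
proof -
  have "(\<lambda>x. (x, th)) differentiable (at s)"
    by (auto intro!: derivative_eq_intros simp: differentiable_def)
  then have "(\<lambda>x. f (x, th)) differentiable (at s)"
    using differentiable_compose[of f "\<lambda>x. (x, th)" s UNIV] assms by simp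
  then show ?thesis unfolding dT_def by (simp add: vector_derivative_works)
qed

lemma has_vector_derivative_dTh:
  fixes f :: "real \<times> real \<Rightarrow> 'a::real_normed_vector"
  assumes "f differentiable (at (s, th))"
  shows "((\<lambda>x. f (s, x)) has_vector_derivative dTh f (s, th)) (at th)"
proof -
  have "(\<lambda>x. (s, x)) differentiable (at th)"
    by (auto intro!: derivative_eq_intros simp: differentiable_def)
  then have "(\<lambda>x. f (s, x)) differentiable (at th)"
    using differentiable_compose[of f "\<lambda>x. (s, x)" th UNIV] assms by simp
  then show ?thesis unfolding dTh_def by (simp add: vector_derivative_works)
qed

lemma has_real_derivative_sqrt_norm_sq_plus:
  fixes \<phi> :: "real \<Rightarrow> 'a::real_inner"
  assumes "(\<phi> has_vector_derivative D) (at x)" "\<epsilon> > 0"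
  shows "((\<lambda>s. sqrt ((norm (\<phi> s))\<^sup>2 + \<epsilon>)) has_real_derivative
           (\<phi> x \<bullet> D) / sqrt ((norm (\<phi> x))\<^sup>2 + \<epsilon>)) (at x)"
proof -
  have d: "(\<phi> has_derivative (\<lambda>h. h *\<^sub>R D)) (at x)"
    using assms(1) by (simp add: has_vector_derivative_def)
  have "((\<lambda>s. \<phi> s \<bullet> \<phi> s + \<epsilon>) has_real_derivative 2 * (\<phi> x \<bullet> D)) (at x)"
    unfolding has_field_derivative_def
    by (rule has_derivative_eq_rhs, rule has_derivative_add[OF has_derivative_inner[OF d d] has_derivative_const])
       (auto simp: inner_commute algebra_simps)
  from DERIV_chain2[OF DERIV_real_sqrt this]
  have "((\<lambda>s. sqrt (\<phi> s \<bullet> \<phi> s + \<epsilon>)) has_real_derivative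
      inverse (sqrt (\<phi> x \<bullet> \<phi> x + \<epsilon>)) / 2 * (2 * (\<phi> x \<bullet> D))) (at x)"
    using assms(2) by (simp add: add_nonneg_pos)
  then show ?thesis
    unfolding power2_norm_eq_inner by (rule DERIV_cong) (simp add: field_simps)
qed

lemma norm_lipschitz_on_segment:
  fixes \<phi> \<phi>' :: "real \<Rightarrow> 'a::real_inner"
  assumes L: "L \<ge> 0"
    and deriv: "\<And>s. s \<in> closed_segment x y \<Longrightarrow> (\<phi> has_vector_derivative \<phi>' s) (at s)"
    and bound: "\<And>s. s \<in> closed_segment x y \<Longrightarrow> \<bar>\<phi> s \<bullet> \<phi>' s\<bar> \<le> L * norm (\<phi> s)"
  shows "\<bar>norm (\<phi> x) - norm (\<phi> y)\<bar> \<le> L * \<bar>x - y\<bar>"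
proof (rule field_le_epsilon)
  fix e :: real
  assume e: "e > 0"
  \<comment> \<open>the norm is not differentiable where \<open>\<phi>\<close> vanishes, so smooth it first\<close>
  define \<psi> where "\<psi> s = sqrt ((norm (\<phi> s))\<^sup>2 + (e/2)\<^sup>2)" for s
  have \<psi>_pos: "\<psi> s > 0" for s
    unfolding \<psi>_def using e by (simp add: add_nonneg_pos)
  have \<psi>_approx: "norm (\<phi> s) \<le> \<psi> s" "\<psi> s \<le> norm (\<phi> s) + e/2" for s
    unfolding \<psi>_def using e by (auto intro!: real_le_rsqrt real_le_lsqrt simp: power2_sum)
  have "\<bar>\<psi> x - \<psi> y\<bar> \<le> L * \<bar>x - y\<bar>"
  proof (rule field_differentiable_bound[where S = "closed_segment x y", simplified])
    fix s assume s: "s \<in> closed_segment x y"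
    show "(\<psi> has_real_derivative (\<phi> s \<bullet> \<phi>' s) / \<psi> s) (at s within closed_segment x y)"
      unfolding \<psi>_def using has_real_derivative_sqrt_norm_sq_plus[OF deriv[OF s]] e
      by (simp add: has_field_derivative_at_within)
    have "\<bar>\<phi> s \<bullet> \<phi>' s\<bar> \<le> L * \<psi> s"
      using bound[OF s] \<psi>_approx(1)[of s] L by (meson mult_left_mono order_trans)
    then show "\<bar>(\<phi> s \<bullet> \<phi>' s) / \<psi> s\<bar> \<le> L"
      using \<psi>_pos[of s] by (simp add: divide_le_eq)
  qed simp_all
  then show "\<bar>norm (\<phi> x) - norm (\<phi> y)\<bar> \<le> L * \<bar>x - y\<bar> + e"
    using \<psi>_approx[of x] \<psi>_approx[of y] by linarith
qed

lemma norm_lipschitz_on_strip: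
  fixes f :: "real \<times> real \<Rightarrow> 'a::real_inner"
  assumes L: "L \<ge> 0"
    and diff: "\<And>q. \<bar>fst q\<bar> \<le> r \<Longrightarrow> f differentiable (at q)"
    and bound_dT: "\<And>q. \<bar>fst q\<bar> \<le> r \<Longrightarrow> \<bar>f q \<bullet> dT f q\<bar> \<le> L * norm (f q)"
    and bound_dTh: "\<And>q. \<bar>fst q\<bar> \<le> r \<Longrightarrow> \<bar>f q \<bullet> dTh f q\<bar> \<le> L * norm (f q)"
    and p: "\<bar>s0\<bar> \<le> r" and q: "\<bar>s1\<bar> \<le> r"
  shows "\<bar>norm (f (s0, th0)) - norm (f (s1, th1))\<bar> \<le> L * (\<bar>s0 - s1\<bar> + \<bar>th0 - th1\<bar>)"
proof -
  have seg: "\<bar>s\<bar> \<le> r" if "s \<in> closed_segment s0 s1" for s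
    using that p q by (auto simp: closed_segment_eq_real_ivl abs_le_iff split: if_splits)
  have "\<bar>norm (f (s0, th0)) - norm (f (s1, th0))\<bar> \<le> L * \<bar>s0 - s1\<bar>"
    using diff bound_dT seg
    by (intro norm_lipschitz_on_segment[OF L, where \<phi>' = "\<lambda>s. dT f (s, th0)"] has_vector_derivative_dT) auto
  moreover have "\<bar>norm (f (s1, th0)) - norm (f (s1, th1))\<bar> \<le> L * \<bar>th0 - th1\<bar>"
    using diff bound_dTh q
    by (intro norm_lipschitz_on_segment[OF L, where \<phi>' = "\<lambda>s. dTh f (s1, s)"] has_vector_derivative_dTh) auto
  ultimately show ?thesis by (simp add: distrib_left)
qed

lemma le_L2norm_cyl_if_le_norm_on_unit_square:
  fixes f :: "real \<times> real \<Rightarrow> real^'n^'n"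
  assumes cont: "continuous_on (cyl t) f"
    and sub: "cbox (a, c) (a + 1, c + 1) \<subseteq> cyl t"
    and m: "m \<ge> 0" and lower: "\<And>q. q \<in> cbox (a, c) (a + 1, c + 1) \<Longrightarrow> m \<le> norm (f q)"
  shows "m \<le> L2norm (cyl t) f"
proof -
  have cyl_cbox: "cyl t = cbox (-t, 0) (t, 2*pi)"
    by (simp add: cyl_def cbox_Pair_eq)
  have int_cyl: "(\<lambda>q. (norm (f q))\<^sup>2) integrable_on cyl t"
    unfolding cyl_cbox using cont[unfolded cyl_cbox]
    by (intro integrable_continuous continuous_intros)
  have int_R: "(\<lambda>q. (norm (f q))\<^sup>2) integrable_on cbox (a, c) (a + 1, c + 1)"
    using integrable_on_subcbox[OF int_cyl[unfolded cyl_cbox]] sub unfolding cyl_cbox by blast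
  have "m\<^sup>2 = integral (cbox (a, c) (a + 1, c + 1)) (\<lambda>q. m\<^sup>2)"
    by (simp add: content_Pair)
  also have "\<dots> \<le> integral (cbox (a, c) (a + 1, c + 1)) (\<lambda>q. (norm (f q))\<^sup>2)"
    using int_R m lower by (intro integral_le) (auto intro: power_mono)
  also have "\<dots> \<le> integral (cyl t) (\<lambda>q. (norm (f q))\<^sup>2)"
    using integral_subset_le[OF sub int_R int_cyl] by simp
  finally show ?thesis
    unfolding L2norm_def by (rule real_le_rsqrt)
qed

lemma norm_le_of_L2norm_cyl:
  fixes f :: "real \<times> real \<Rightarrow> real^'n^'n"
  assumes L: "L \<ge> 0"
    and periodic: "\<And>s th. f (s, th + 2*pi) = f (s, th)"
    and diff: "\<And>q. \<bar>fst q\<bar> \<le> t - 1/2 \<Longrightarrow> f differentiable (at q)"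
    and bound_dT: "\<And>q. \<bar>fst q\<bar> \<le> t - 1/2 \<Longrightarrow> \<bar>f q \<bullet> dT f q\<bar> \<le> L * norm (f q)"
    and bound_dTh: "\<And>q. \<bar>fst q\<bar> \<le> t - 1/2 \<Longrightarrow> \<bar>f q \<bullet> dTh f q\<bar> \<le> L * norm (f q)"
    and cont: "continuous_on (cyl t) f"
    and L2: "L2norm (cyl t) f \<le> K"
    and s0: "\<bar>s0\<bar> \<le> t - 1"
  shows "norm (f (s0, th)) \<le> 3/2 * L + K"
proof -
  \<comment> \<open>move the angle into the fundamental domain, where a unit square around it fits into \<open>cyl t\<close>\<close>
  obtain th' where th': "0 \<le> th'" "th' < 2*pi" "f (s0, th') = f (s0, th)"
    using periodic_representative[of "\<lambda>th. f (s0, th)" "2*pi" th] periodic by auto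
  define \<tau> where "\<tau> = min th' (2*pi - 1)"
  have \<tau>: "0 \<le> \<tau>" "\<tau> + 1 \<le> 2*pi" "\<tau> \<le> th'" "th' \<le> \<tau> + 1"
    using th' pi_gt3 by (auto simp: \<tau>_def)
  define R where "R = cbox (s0 - 1/2, \<tau>) (s0 - 1/2 + 1, \<tau> + 1)"
  have R_sub: "R \<subseteq> cyl t"
    using \<tau> s0 unfolding R_def cyl_def by (auto simp: cbox_Pair_eq)
  have near: "norm (f (s0, th)) - 3/2 * L \<le> norm (f q)" if "q \<in> R" for q
  proof -
    obtain s1 th1 where q: "q = (s1, th1)" by fastforce
    have s1: "\<bar>s0 - s1\<bar> \<le> 1/2" and th1: "\<bar>th' - th1\<bar> \<le> 1"
      using that \<tau> unfolding R_def q cbox_Pair_eq abs_le_iff by auto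
    have "\<bar>s0\<bar> \<le> t - 1/2" "\<bar>s1\<bar> \<le> t - 1/2"
      using s0 s1 unfolding abs_le_iff by linarith+
    then have "\<bar>norm (f (s0, th')) - norm (f (s1, th1))\<bar> \<le> L * (\<bar>s0 - s1\<bar> + \<bar>th' - th1\<bar>)"
      using norm_lipschitz_on_strip[OF L diff bound_dT bound_dTh] by blast
    also have "\<dots> \<le> L * (3/2)"
      using s1 th1 L by (intro mult_left_mono) auto
    finally have "\<bar>norm (f (s0, th)) - norm (f q)\<bar> \<le> 3/2 * L" using th'(3) q by simp
    then show ?thesis by (simp only: abs_le_iff) linarith
  qed
  have "max 0 (norm (f (s0, th)) - 3/2 * L) \<le> L2norm (cyl t) f"
    by (rule le_L2norm_cyl_if_le_norm_on_unit_square[OF cont R_sub[unfolded R_def]])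
       (use near[unfolded R_def] in auto)
  then show ?thesis using L2 by linarith
qed

lemma curv_norm_le:
  fixes G :: "(real^'n^'n) set" and a1 a2 b1 b2 :: "real \<times> real \<Rightarrow> real^'n^'n" and lam :: "real \<Rightarrow> real"
  assumes orth: "\<forall>x\<in>G. orthogonal_matrix x" and \<delta>: "\<delta> > 0"
    and smooth1: "smooth_on ({t. \<bar>t\<bar> < T + \<epsilon>} \<times> UNIV) a1"
    and smooth2: "smooth_on ({t. \<bar>t\<bar> < T + \<epsilon>} \<times> UNIV) a2" and \<epsilon>: "\<epsilon> > 0"
    and per: "\<forall>t s. a1 (t, s + 2*pi) = a1 (t, s) \<and> a2 (t, s + 2*pi) = a2 (t, s)"
    and lie: "\<forall>p\<in>{-T..T} \<times> UNIV. a1 p \<in> lie_alg G \<and> a2 p \<in> lie_alg G"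
    and eq: "\<forall>p\<in>{-T..T} \<times> UNIV. DAstar1 a1 a2 (curv a1 a2) p = lam (fst p) *\<^sub>R b1 p \<and>
                          DAstar2 a1 a2 (curv a1 a2) p = lam (fst p) *\<^sub>R b2 p"
    and B: "\<forall>p\<in>{-T..T} \<times> UNIV. sqrt ((norm (b1 p))\<^sup>2 + (norm (b2 p))\<^sup>2) \<le> CB"
    and lam: "\<forall>t\<in>{-T..T}. \<bar>lam t\<bar> \<le> C0 * \<delta> * exp (\<bar>t\<bar> - T)"
    and L2: "\<forall>t\<in>{0<..T}. L2norm (cyl t) (curv a1 a2) \<le> C0 * \<delta> * exp (t - T)"
    and t: "t \<in> {1..T}" and p: "p \<in> {-(t-1)..t-1} \<times> UNIV"
  shows "norm (curv a1 a2 p) \<le> (3/2 * \<bar>CB\<bar> + 1) * \<bar>C0\<bar> * \<delta> * exp (t - T)"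
proof -
  define K where "K = \<bar>C0\<bar> * \<delta> * exp (t - T)"
  define L where "L = \<bar>CB\<bar> * K"
  have L_nonneg: "L \<ge> 0" unfolding L_def K_def using \<delta> by simp
  have in_strip: "q \<in> {t. \<bar>t\<bar> < T + \<epsilon>} \<times> UNIV" "q \<in> {-T..T} \<times> UNIV" if "\<bar>fst q\<bar> \<le> t" for q
    using that t \<epsilon> by (cases q; auto)+
  have lam_K: "\<bar>lam s\<bar> \<le> K" if "\<bar>s\<bar> \<le> t" for s
  proof -
    have "s \<in> {-T..T}" using that t by (auto simp: abs_le_iff)
    then have "\<bar>lam s\<bar> \<le> C0 * \<delta> * exp (\<bar>s\<bar> - T)" using lam by blast
    also have "\<dots> \<le> K" unfolding K_def using that \<delta> by (intro mult_mono) auto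
    finally show ?thesis .
  qed
  have bounds: "\<bar>curv a1 a2 q \<bullet> dT (curv a1 a2) q\<bar> \<le> L * norm (curv a1 a2 q)
      \<and> \<bar>curv a1 a2 q \<bullet> dTh (curv a1 a2) q\<bar> \<le> L * norm (curv a1 a2 q)" if "\<bar>fst q\<bar> \<le> t" for q
  proof -
    have skew: "transpose (a1 q) = - a1 q" "transpose (a2 q) = - a2 q"
      using lie_alg_skew[OF orth] lie in_strip(2)[OF that] by blast+
    have "\<bar>lam (fst q)\<bar> * CB \<le> L" unfolding L_def
      using lam_K[OF that] by (metis abs_ge_self abs_ge_zero mult.commute mult_mono)
    moreover note inner_partials_bound_if_DAstar_eq[of a1 q a2 "curv a1 a2" "lam (fst q)" b1 b2 CB, OF skew]
    ultimately show ?thesis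
      using eq B in_strip(2)[OF that] by (meson mult_right_mono norm_ge_zero order_trans)
  qed
  have "norm (curv a1 a2 (fst p, snd p)) \<le> 3/2 * L + K"
  proof (rule norm_le_of_L2norm_cyl)
    show "curv a1 a2 (s, th + 2*pi) = curv a1 a2 (s, th)" for s th
      using per by (intro curv_periodic) auto
    show "curv a1 a2 differentiable (at q)" if "\<bar>fst q\<bar> \<le> t - 1/2" for q
      using that by (intro curv_differentiable[OF smooth1 smooth2] in_strip(1)) simp
    show "continuous_on (cyl t) (curv a1 a2)"
      using in_strip(1) by (intro curv_continuous_on[OF smooth1 smooth2]) (auto simp: cyl_def)
    show "L2norm (cyl t) (curv a1 a2) \<le> K"
    proof -
      have "L2norm (cyl t) (curv a1 a2) \<le> C0 * \<delta> * exp (t - T)" using L2 t by auto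
      also have "\<dots> \<le> K" unfolding K_def using \<delta> by (intro mult_right_mono) auto
      finally show ?thesis .
    qed
  qed (use t p L_nonneg bounds in auto)
  then show ?thesis unfolding L_def K_def by (simp add: algebra_simps)
qed

theorem lemma3p1:
  fixes G :: "(real^'n^'n) set" and C0 CB Cc :: real
  assumes "compact_matrix_group G"
  shows "\<exists>C. \<forall>T \<delta> (a1 :: real \<times> real \<Rightarrow> real^'n^'n) a2 b1 b2 (lam :: real \<Rightarrow> real).
    T \<ge> 1 \<and> \<delta> > 0 \<and>
    (\<exists>\<epsilon>>0. smooth_on ({t. \<bar>t\<bar> < T + \<epsilon>} \<times> UNIV) a1 \<and> smooth_on ({t. \<bar>t\<bar> < T + \<epsilon>} \<times> UNIV) a2) \<and>
    (\<forall>t s. a1 (t, s + 2*pi) = a1 (t, s) \<and> a2 (t, s + 2*pi) = a2 (t, s)) \<and>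
    (\<forall>p\<in>{-T..T} \<times> UNIV. a1 p \<in> lie_alg G \<and> a2 p \<in> lie_alg G \<and> b1 p \<in> lie_alg G \<and> b2 p \<in> lie_alg G) \<and>
    (\<forall>t s. b1 (t, s + 2*pi) = b1 (t, s) \<and> b2 (t, s + 2*pi) = b2 (t, s)) \<and>
    (\<forall>p\<in>{-T..T} \<times> UNIV. DAstar1 a1 a2 (curv a1 a2) p = lam (fst p) *\<^sub>R b1 p \<and>
                          DAstar2 a1 a2 (curv a1 a2) p = lam (fst p) *\<^sub>R b2 p) \<and>
    (\<forall>p\<in>{-T..T} \<times> UNIV. sqrt ((norm (b1 p))\<^sup>2 + (norm (b2 p))\<^sup>2) \<le> CB) \<and>
    (\<forall>t\<in>{-T..T}. \<bar>lam t\<bar> \<le> C0 * \<delta> * exp (\<bar>t\<bar> - T)) \<and>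
    (\<forall>t\<in>{0<..T}. L2norm (cyl t) (curv a1 a2) \<le> C0 * \<delta> * exp (t - T)) \<and>
    (\<forall>x. \<bar>fst x\<bar> \<le> T - 1 \<longrightarrow> coulomb_gauge_on G Cc a1 a2 (ball x 1))
    \<longrightarrow> (\<forall>t\<in>{1..T}. \<forall>p\<in>{-(t-1)..t-1} \<times> UNIV. norm (curv a1 a2 p) \<le> C * \<delta> * exp (t - T))"
proof -
  have orth: "\<forall>x\<in>G. orthogonal_matrix x"
    using assms by (simp add: compact_matrix_group_def)
  show ?thesis
    by (intro exI[of _ "(3/2 * \<bar>CB\<bar> + 1) * \<bar>C0\<bar>"] allI impI ballI; elim conjE exE)
       (rule curv_norm_le[OF orth]; (assumption | blast))
qed
end
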